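(* Assume (FWW) for a flow $\Phi_t$ on $\mathbb{R}^n$ and a $k$-cone $C$. Let $\mathcal{D}\subset\mathbb{R}^n$ be open and $\omega$-compact, let $x\in\mathcal{D}$, and consider the $k$-exponential separation of $(\Phi_t,D\Phi_t)$ along $\omega(x)$ associated with $C$. If $\lambda_{kz}>0$ for every $z\in\omega(x)$, then $x\in\overline{Q}$.
   Context: A closed set $C\subset\mathbb{R}^n$ is a $k$-cone if $lv\in C$ for all $v\in C$, $l\in\mathbb{R}$, and the maximal dimension of a linear subspace contained in $C$ is $k$. $C$ is $k$-solid if there is a $k$-dimensional subspace $W$ with $W\setminus\{0\}\subset\operatorname{Int}C$. Write $x\sim y$ if $x-y\in C$ and $x\approx y$ if $x-y\in\operatorname{Int}C$. A flow $\Phi_t$ is strongly monotone with respect to a $k$-solid cone $C$ if $x\sim y$ implies $\Phi_t(x)\sim\Phi_t(y)$ for $t\ge0$, and $x\ne y$, $x\sim y$ imply $\Phi_t(x)\approx\Phi_t(y)$ for $t>0$. Assumption (FWW): the flow $\Phi_t$ on $\mathbb{R}^n$ is $C^{1,\alpha}$-smooth ($C^1$ with locally $\alpha$-Hölder derivative, $\alpha\in(0,1]$), strongly monotone with respect to the $k$-cone $C$, and $D_x\Phi_t(C\setminus\{0\})\subset\operatorname{Int}C$ for $t>0$. A set $\mathcal{D}$ is $\omega$-compact if every forward orbit from $\mathcal{D}$ is bounded and $\bigcup_{x\in\mathcal{D}}\omega(x)$ is bounded. A nontrivial orbit $O(x)=\{\Phi_t(x):t\ge0\}$ is pseudo-ordered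 if it contains two distinct points $\Phi_{t_1}(x)\sim\Phi_{t_2}(x)$; $Q$ is the set of $x$ whose orbit is pseudo-ordered, and $\overline{Q}$ its closure. A $k$-exponential separation along a compact invariant set $K$ associated with $C$ consists of continuous (in the Grassmannian gap metric) families of $k$-dimensional subspaces $E_y$ and $(n-k)$-dimensional subspaces $F_y$, $y\in K$, with $\mathbb{R}^n=E_y\oplus F_y$, $D_y\Phi_tE_y=E_{\Phi_t(y)}$, $D_y\Phi_tF_y\subset F_{\Phi_t(y)}$ ($t>0$), constants $M>0$, $0<\gamma<1$ with $\|D_y\Phi_tw\|\le M\gamma^t\|D_y\Phi_tv\|$ for unit $w\in F_y$, $v\in E_y$, $t\ge0$, and $E_y\subset\operatorname{Int}C\cup\{0\}$, $F_y\cap C=\{0\}$; under (FWW) such a separation exists along every compact invariant set. The $k$-Lyapunov exponent is $\lambda_{kz}=\limsup_{t\to+\infty}t^{-1}\log\inf_{v\in E_z,\|v\|=1}\|D_z\Phi_tv\|$. *)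

theory Defs
  imports "HOL-Analysis.Analysis"
begin

definition k_cone :: "nat \<Rightarrow> 'a::euclidean_space set \<Rightarrow> bool" where
  "k_cone k C \<longleftrightarrow> closed C \<and> (\<forall>v\<in>C. \<forall>l::real. l *\<^sub>R v \<in> C)
     \<and> (\<exists>W. subspace W \<and> W \<subseteq> C \<and> dim W = k)
     \<and> (\<forall>W. subspace W \<and> W \<subseteq> C \<longrightarrow> dim W \<le> k)"

definition k_solid :: "nat \<Rightarrow> 'a::euclidean_space set \<Rightarrow> bool" where
  "k_solid k C \<longleftrightarrow> (\<exists>W. subspace W \<and> dim W = k \<and> W - {0} \<subseteq> interior C)"

definition cone_rel :: "'a::euclidean_space set \<Rightarrow> 'a \<Rightarrow> 'a \<Rightarrow> bool" where
  "cone_rel C x y \<longleftrightarrow> x - y \<in> C"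

definition cone_rel_strict :: "'a::euclidean_space set \<Rightarrow> 'a \<Rightarrow> 'a \<Rightarrow> bool" where
  "cone_rel_strict C x y \<longleftrightarrow> x - y \<in> interior C"

definition is_flow :: "(real \<Rightarrow> 'a::euclidean_space \<Rightarrow> 'a) \<Rightarrow> bool" where
  "is_flow \<Phi> \<longleftrightarrow> continuous_on UNIV (\<lambda>p. \<Phi> (fst p) (snd p))
     \<and> (\<forall>x. \<Phi> 0 x = x) \<and> (\<forall>t s x. \<Phi> (t + s) x = \<Phi> t (\<Phi> s x))"

definition C1_alpha_flow ::
  "real \<Rightarrow> (real \<Rightarrow> 'a::euclidean_space \<Rightarrow> 'a) \<Rightarrow> (real \<Rightarrow> 'a \<Rightarrow> 'a \<Rightarrow>\<^sub>L 'a) \<Rightarrow> bool" where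
  "C1_alpha_flow \<alpha> \<Phi> D \<longleftrightarrow> 0 < \<alpha> \<and> \<alpha> \<le> 1 \<and> is_flow \<Phi>
     \<and> (\<forall>t x. (\<Phi> t has_derivative blinfun_apply (D t x)) (at x))
     \<and> (\<forall>t x. \<exists>r>0. \<exists>L. \<forall>y\<in>ball x r. \<forall>z\<in>ball x r.
            norm (D t y - D t z) \<le> L * dist y z powr \<alpha>)"

definition strongly_monotone ::
  "(real \<Rightarrow> 'a::euclidean_space \<Rightarrow> 'a) \<Rightarrow> 'a set \<Rightarrow> bool" where
  "strongly_monotone \<Phi> C \<longleftrightarrow>
     (\<forall>x y t. cone_rel C x y \<and> t \<ge> 0 \<longrightarrow> cone_rel C (\<Phi> t x) (\<Phi> t y))
   \<and> (\<forall>x y t. x \<noteq> y \<and> cone_rel C x y \<and> t > 0 \<longrightarrow> cone_rel_strict C (\<Phi> t x) (\<Phi> t y))"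

text \<open>Assumption (FWW) for the k-cone C (strong monotonicity is defined for k-solid cones).\<close>
definition FWW ::
  "real \<Rightarrow> (real \<Rightarrow> 'a::euclidean_space \<Rightarrow> 'a) \<Rightarrow> (real \<Rightarrow> 'a \<Rightarrow> 'a \<Rightarrow>\<^sub>L 'a) \<Rightarrow> nat \<Rightarrow> 'a set \<Rightarrow> bool" where
  "FWW \<alpha> \<Phi> D k C \<longleftrightarrow> C1_alpha_flow \<alpha> \<Phi> D \<and> k_cone k C \<and> k_solid k C
     \<and> strongly_monotone \<Phi> C
     \<and> (\<forall>t x v. t > 0 \<and> v \<in> C - {0} \<longrightarrow> D t x v \<in> interior C)"

definition omega_limit :: "(real \<Rightarrow> 'a::euclidean_space \<Rightarrow> 'a) \<Rightarrow> 'a \<Rightarrow> 'a set" where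
  "omega_limit \<Phi> x = {y. \<exists>s::nat \<Rightarrow> real. filterlim s at_top sequentially
                         \<and> (\<lambda>m. \<Phi> (s m) x) \<longlonglongrightarrow> y}"

definition forward_orbit :: "(real \<Rightarrow> 'a \<Rightarrow> 'a) \<Rightarrow> 'a \<Rightarrow> 'a set" where
  "forward_orbit \<Phi> x = (\<lambda>t. \<Phi> t x) ` {0..}"

definition omega_compact :: "(real \<Rightarrow> 'a::euclidean_space \<Rightarrow> 'a) \<Rightarrow> 'a set \<Rightarrow> bool" where
  "omega_compact \<Phi> \<D> \<longleftrightarrow> (\<forall>x\<in>\<D>. bounded (forward_orbit \<Phi> x))
     \<and> bounded (\<Union>x\<in>\<D>. omega_limit \<Phi> x)"

definition pseudo_ordered_set :: "(real \<Rightarrow> 'a::euclidean_space \<Rightarrow> 'a) \<Rightarrow> 'a set \<Rightarrow> 'a set" where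
  "pseudo_ordered_set \<Phi> C = {x. (\<exists>t. \<Phi> t x \<noteq> x) \<and>
      (\<exists>t1 t2. 0 \<le> t1 \<and> 0 \<le> t2 \<and> \<Phi> t1 x \<noteq> \<Phi> t2 x \<and> cone_rel C (\<Phi> t1 x) (\<Phi> t2 x))}"

definition gap_dir :: "'a::euclidean_space set \<Rightarrow> 'a set \<Rightarrow> real" where
  "gap_dir U V = Sup ({0} \<union> {infdist u V | u. u \<in> U \<and> norm u = 1})"

definition gap :: "'a::euclidean_space set \<Rightarrow> 'a set \<Rightarrow> real" where
  "gap U V = max (gap_dir U V) (gap_dir V U)"

definition gap_continuous_on :: "'a::euclidean_space set \<Rightarrow> ('a \<Rightarrow> 'a set) \<Rightarrow> bool" where
  "gap_continuous_on K E \<longleftrightarrow> (\<forall>y\<in>K. \<forall>\<epsilon>>0. \<exists>\<delta>>0. \<forall>y'\<in>K. dist y' y < \<delta> \<longrightarrow> gap (E y') (E y) < \<epsilon>)"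

definition exp_separation ::
  "(real \<Rightarrow> 'a::euclidean_space \<Rightarrow> 'a) \<Rightarrow> (real \<Rightarrow> 'a \<Rightarrow> 'a \<Rightarrow>\<^sub>L 'a) \<Rightarrow> nat \<Rightarrow> 'a set
     \<Rightarrow> 'a set \<Rightarrow> ('a \<Rightarrow> 'a set) \<Rightarrow> ('a \<Rightarrow> 'a set) \<Rightarrow> bool" where
  "exp_separation \<Phi> D k C K E F \<longleftrightarrow>
     gap_continuous_on K E \<and> gap_continuous_on K F
   \<and> (\<forall>y\<in>K. subspace (E y) \<and> dim (E y) = k \<and> subspace (F y) \<and> dim (F y) = DIM('a) - k
        \<and> E y \<inter> F y = {0} \<and> (\<forall>z. \<exists>e\<in>E y. \<exists>f\<in>F y. z = e + f))
   \<and> (\<forall>y\<in>K. \<forall>t>0. blinfun_apply (D t y) ` E y = E (\<Phi> t y)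
        \<and> blinfun_apply (D t y) ` F y \<subseteq> F (\<Phi> t y))
   \<and> (\<exists>M>0. \<exists>\<gamma>. 0 < \<gamma> \<and> \<gamma> < 1 \<and>
        (\<forall>y\<in>K. \<forall>t\<ge>0. \<forall>w\<in>F y. \<forall>v\<in>E y. norm w = 1 \<and> norm v = 1 \<longrightarrow>
            norm (D t y w) \<le> M * \<gamma> powr t * norm (D t y v)))
   \<and> (\<forall>y\<in>K. E y \<subseteq> interior C \<union> {0} \<and> F y \<inter> C = {0})"

definition lyap_k :: "(real \<Rightarrow> 'a::euclidean_space \<Rightarrow> 'a \<Rightarrow>\<^sub>L 'a) \<Rightarrow> ('a \<Rightarrow> 'a set) \<Rightarrow> 'a \<Rightarrow> ereal" where
  "lyap_k D E z = Limsup at_top (\<lambda>t::real.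
      ereal (ln (Inf {norm (D t z v) | v. v \<in> E z \<and> norm v = 1}) / t))"

end

theory Submission
  imports Defs "HOL-Real_Asymp.Real_Asymp"
begin

(* If every point of omega(x) has positive k-Lyapunov exponent, the exponential separation
   makes the linearised flow stretch every nonzero cone vector arbitrarily at points of omega(x).
   By the C^{1,alpha} smoothness this transfers to the flow itself: there are S and rho > 0 such
   that every perturbation u in C of Phi_s x with s >= S and |u| < rho is eventually stretched by
   a factor 3/2.  Hence, for y - x in C small and nonzero, the orbits of x and y, which stay
   ordered by monotonicity, reach distance exactly rho at some time t.  Taking y_m -> x along a
   cone direction and passing to a limit of (Phi_{t_m} x, Phi_{t_m} y_m) yields an ordered pair
   z /= w with |w - z| = rho.  Strong monotonicity puts Phi_1 w - Phi_1 z into Int C.  Fixing a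
   time sigma with Phi_sigma x close to z, for large m this open condition is inherited by the
   two points Phi_{1+t_m} y_m and Phi_{1+sigma} y_m of a single orbit, so y_m is pseudo-ordered. *)

lemma flow_add: "is_flow \<Phi> \<Longrightarrow> \<Phi> t (\<Phi> s y) = \<Phi> (t + s) y"
  unfolding is_flow_def by simp

lemma flow_inj:
  assumes "is_flow \<Phi>" and "\<Phi> t a = \<Phi> t b"
  shows "a = b"
  using assms unfolding is_flow_def by (metis add.left_inverse)

lemma continuous_on_flow_space:
  assumes "is_flow \<Phi>"
  shows "continuous_on UNIV (\<Phi> t)"
proof -
  have "continuous_on UNIV ((\<lambda>p. \<Phi> (fst p) (snd p)) \<circ> Pair t)"
    using assms unfolding is_flow_def
    by (intro continuous_on_compose continuous_intros) (auto elim: continuous_on_subset)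
  then show ?thesis by (simp add: o_def)
qed

lemma continuous_on_flow_time:
  assumes "is_flow \<Phi>"
  shows "continuous_on UNIV (\<lambda>t. \<Phi> t y)"
proof -
  have "continuous_on UNIV ((\<lambda>p. \<Phi> (fst p) (snd p)) \<circ> (\<lambda>t. (t, y)))"
    using assms unfolding is_flow_def
    by (intro continuous_on_compose continuous_intros) (auto elim: continuous_on_subset)
  then show ?thesis by (simp add: o_def)
qed

(* The sign hypothesis is needed because Isabelle's ln is even: ln x = ln |x|. *)
lemma frequently_exp_less_of_Limsup_ln_pos:
  fixes f :: "real \<Rightarrow> real"
  assumes pos: "Limsup at_top (\<lambda>t. ereal (ln (f t) / t)) > 0" and nonneg: "\<And>t. 0 \<le> f t"
  obtains c where "c > 0" and "\<exists>\<^sub>F t in at_top. exp (c * t) < f t"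
proof -
  obtain c where c: "0 < ereal c" "ereal c < Limsup at_top (\<lambda>t. ereal (ln (f t) / t))"
    using pos ereal_dense2 by blast
  have "\<exists>\<^sub>F t in at_top. c < ln (f t) / t"
  proof (rule ccontr)
    assume "\<not> ?thesis"
    then have "\<forall>\<^sub>F t in at_top. ereal (ln (f t) / t) \<le> ereal c"
      by (simp add: not_frequently not_less)
    then have "Limsup at_top (\<lambda>t. ereal (ln (f t) / t)) \<le> ereal c"
      by (simp add: Limsup_bounded)
    with c show False by simp
  qed
  moreover have "\<forall>\<^sub>F t in at_top. (t::real) > 0" by (rule eventually_gt_at_top)
  ultimately have "\<exists>\<^sub>F t in at_top. exp (c * t) < f t"
  proof (rule frequently_rev_mp[OF _ eventually_mono], intro impI)
    fix t :: real assume "t > 0" and "c < ln (f t) / t"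
    then have "c * t < ln (f t)" by (simp add: field_simps)
    moreover have "0 < c * t" using c \<open>t > 0\<close> by simp
    ultimately have "f t > 0" using nonneg[of t] by (cases "f t = 0") auto
    with \<open>c * t < ln (f t)\<close> show "exp (c * t) < f t" by (metis exp_less_mono exp_ln)
  qed
  with c that show ?thesis by simp
qed

definition min_modulus :: "('a::real_normed_vector \<Rightarrow>\<^sub>L 'b::real_normed_vector) \<Rightarrow> 'a set \<Rightarrow> real" where
  "min_modulus L V = Inf {norm (L v) | v. v \<in> V \<and> norm v = 1}"

lemma lyap_k_eq_Limsup_min_modulus:
  "lyap_k D E z = Limsup at_top (\<lambda>t. ereal (ln (min_modulus (D t z) (E z)) / t))"
  unfolding lyap_k_def min_modulus_def ..

lemma min_modulus_le:
  assumes "subspace V" and "v \<in> V"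
  shows "min_modulus L V * norm v \<le> norm (L v)"
proof (cases "v = 0")
  case False
  have "bdd_below {norm (L w) | w. w \<in> V \<and> norm w = 1}"
    by (rule bdd_belowI[of _ 0]) auto
  moreover have "v /\<^sub>R norm v \<in> V" using assms by (simp add: subspace_scale)
  ultimately have "min_modulus L V \<le> norm (L (v /\<^sub>R norm v))"
    unfolding min_modulus_def using False by (intro cInf_lower) auto
  with False show ?thesis by (simp add: blinfun.scaleR_right field_simps)
qed simp

lemma min_modulus_nonneg:
  assumes "subspace V" and "v \<in> V" and "v \<noteq> 0"
  shows "0 \<le> min_modulus L V"
proof -
  have "v /\<^sub>R norm v \<in> V" using assms by (simp add: subspace_scale)
  then show ?thesis
    unfolding min_modulus_def using assms(3) by (intro cInf_greatest) auto
qed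

lemma exp_separation_eventually_dominates:
  assumes es: "exp_separation \<Phi> D k C K E F" and "z \<in> K"
    and eE: "e \<in> E z" and e0: "e \<noteq> 0" and fF: "f \<in> F z"
  shows "\<forall>\<^sub>F t in at_top. norm (D t z f) \<le> norm (D t z e) / 2"
proof -
  have sE: "subspace (E z)" and sF: "subspace (F z)"
    using es \<open>z \<in> K\<close> unfolding exp_separation_def by auto
  obtain M \<gamma> where M: "M > 0" "0 < \<gamma>" "\<gamma> < 1" and dom:
    "\<And>t w v. t \<ge> 0 \<Longrightarrow> w \<in> F z \<Longrightarrow> v \<in> E z \<Longrightarrow> norm w = 1 \<Longrightarrow> norm v = 1 \<Longrightarrow>
        norm (D t z w) \<le> M * \<gamma> powr t * norm (D t z v)"
    using es \<open>z \<in> K\<close> unfolding exp_separation_def by metis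
  have bound: "norm (D t z f) \<le> M * \<gamma> powr t * norm f / norm e * norm (D t z e)" if "t \<ge> 0" for t
  proof (cases "f = 0")
    case False
    have "norm (D t z f) = norm f * norm (D t z (f /\<^sub>R norm f))"
      using False by (simp add: blinfun.scaleR_right)
    also have "\<dots> \<le> norm f * (M * \<gamma> powr t * norm (D t z (e /\<^sub>R norm e)))"
      using False eE e0 fF sE sF by (intro mult_left_mono dom that) (auto simp: subspace_scale)
    also have "\<dots> = M * \<gamma> powr t * norm f / norm e * norm (D t z e)"
      by (simp add: blinfun.scaleR_right divide_inverse mult_ac)
    finally show ?thesis .
  qed simp
  have "((\<lambda>t. \<gamma> powr t) \<longlongrightarrow> 0) at_top" using M by real_asymp
  then have "((\<lambda>t. M * \<gamma> powr t * norm f / norm e) \<longlongrightarrow> M * 0 * norm f / norm e) at_top"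
    by (intro tendsto_intros) (use e0 in simp_all)
  then have "\<forall>\<^sub>F t in at_top. M * \<gamma> powr t * norm f / norm e < 1/2"
    by (rule order_tendstoD) simp
  with eventually_ge_at_top[of 0] show ?thesis
  proof eventually_elim
    case (elim t)
    have "M * \<gamma> powr t * norm f / norm e * norm (D t z e) \<le> 1/2 * norm (D t z e)"
      using elim(2) by (intro mult_right_mono) auto
    then show ?case using bound[OF elim(1)] by linarith
  qed
qed

lemma exp_separation_cone_growth:
  assumes es: "exp_separation \<Phi> D k C K E F" and "z \<in> K"
    and lyap: "lyap_k D E z > 0" and u: "u \<in> C" "u \<noteq> 0"
  shows "\<exists>t>0. A < norm (D t z u)"
proof -
  obtain e f where ef: "e \<in> E z" "f \<in> F z" "u = e + f"
    using es \<open>z \<in> K\<close> unfolding exp_separation_def by metis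
  have sE: "subspace (E z)" and FC: "F z \<inter> C = {0}"
    using es \<open>z \<in> K\<close> unfolding exp_separation_def by auto
  have "e \<noteq> 0"
  proof
    assume "e = 0"
    then have "u \<in> F z \<inter> C" using ef u by simp
    with FC u show False by blast
  qed
  obtain c where "c > 0" and freq: "\<exists>\<^sub>F t in at_top. exp (c * t) < min_modulus (D t z) (E z)"
    by (rule frequently_exp_less_of_Limsup_ln_pos[OF lyap[unfolded lyap_k_eq_Limsup_min_modulus]
          min_modulus_nonneg[OF sE ef(1) \<open>e \<noteq> 0\<close>]])
  have "filterlim (\<lambda>t. exp (c * t)) at_top at_top" using \<open>c > 0\<close> by real_asymp
  then have "\<forall>\<^sub>F t in at_top. 2 * \<bar>A\<bar> / norm e < exp (c * t)"
    by (simp add: filterlim_at_top_dense)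
  then have "\<forall>\<^sub>F t in at_top. t > 0 \<and> 2 * \<bar>A\<bar> / norm e < exp (c * t)
      \<and> norm (D t z f) \<le> norm (D t z e) / 2"
    using eventually_gt_at_top[of 0]
      exp_separation_eventually_dominates[OF es \<open>z \<in> K\<close> ef(1) \<open>e \<noteq> 0\<close> ef(2)]
    by eventually_elim auto
  with freq have "\<exists>\<^sub>F t in at_top. (t > 0 \<and> 2 * \<bar>A\<bar> / norm e < exp (c * t)
      \<and> norm (D t z f) \<le> norm (D t z e) / 2) \<and> exp (c * t) < min_modulus (D t z) (E z)"
    by (rule frequently_eventually_conj)
  then obtain t where t: "t > 0" "2 * \<bar>A\<bar> / norm e < exp (c * t)"
    "norm (D t z f) \<le> norm (D t z e) / 2" "exp (c * t) < min_modulus (D t z) (E z)"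
    by (auto dest: frequently_ex)
  have "2 * \<bar>A\<bar> < norm e * exp (c * t)" using t(2) \<open>e \<noteq> 0\<close> by (simp add: field_simps)
  also have "\<dots> < norm e * min_modulus (D t z) (E z)" using t(4) \<open>e \<noteq> 0\<close> by simp
  also have "\<dots> \<le> norm (D t z e)" using min_modulus_le[OF sE ef(1)] by (simp add: mult.commute)
  also have "\<dots> \<le> 2 * norm (D t z u)"
    using t(3) norm_diff_ineq[of "D t z e" "D t z f"] by (simp add: ef(3) blinfun.add_right)
  finally show ?thesis using t(1) by auto
qed

lemma C1_alpha_flow_continuous_derivative:
  assumes "C1_alpha_flow \<alpha> \<Phi> D"
  shows "continuous (at z) (D t)"
proof -
  obtain r L where "r > 0" and hoelder:
    "\<And>y. y \<in> ball z r \<Longrightarrow> norm (D t y - D t z) \<le> L * dist y z powr \<alpha>"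
    using assms unfolding C1_alpha_flow_def by (metis centre_in_ball)
  have "\<alpha> > 0" using assms unfolding C1_alpha_flow_def by simp
  have "((\<lambda>y. L * dist y z powr \<alpha>) \<longlongrightarrow> L * 0) (at z)"
    using \<open>\<alpha> > 0\<close> by (intro tendsto_mult tendsto_const tendsto_zero_powrI tendsto_dist_iff[THEN iffD1]) auto
  then have lim: "((\<lambda>y. L * dist y z powr \<alpha>) \<longlongrightarrow> 0) (at z)" by simp
  have "\<forall>\<^sub>F y in at z. norm (D t y - D t z) \<le> L * dist y z powr \<alpha>"
    using eventually_at_in_open'[OF open_ball centre_in_ball[THEN iffD2, OF \<open>r > 0\<close>]]
    by (rule eventually_mono) (rule hoelder)
  from Lim_null_comparison[OF this lim] have "((\<lambda>y. D t y - D t z) \<longlongrightarrow> 0) (at z)" .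
  then show ?thesis unfolding continuous_at by (rule LIM_zero_cancel)
qed

lemma uniform_linearization:
  fixes f :: "'a::real_normed_vector \<Rightarrow> 'b::real_normed_vector"
  assumes deriv: "\<And>y. (f has_derivative blinfun_apply (f' y)) (at y)"
    and cont: "continuous (at z) f'" and "\<epsilon> > 0"
  obtains \<delta> where "\<delta> > 0"
    and "\<And>a u. dist a z + norm u < \<delta> \<Longrightarrow> norm (f (a + u) - f a - f' z u) \<le> \<epsilon> * norm u"
proof -
  have "\<exists>\<delta>>0. \<forall>y. dist y z < \<delta> \<longrightarrow> dist (f' y) (f' z) < \<epsilon>"
    using cont \<open>\<epsilon> > 0\<close> unfolding continuous_at_eps_delta by simp
  then obtain \<delta> where "\<delta> > 0" and close: "\<And>y. dist y z < \<delta> \<Longrightarrow> dist (f' y) (f' z) < \<epsilon>"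
    by blast
  have "norm (f (a + u) - f a - f' z u) \<le> \<epsilon> * norm u" if "dist a z + norm u < \<delta>" for a u
  proof -
    have segment: "a + s *\<^sub>R (a + u - a) \<in> ball z \<delta>" if "s \<in> {0..1}" for s
    proof -
      have "dist z (a + s *\<^sub>R u) \<le> dist z a + norm (s *\<^sub>R u)"
        by (metis dist_norm dist_triangle2 norm_minus_commute add_diff_cancel_left' dist_commute)
      also have "norm (s *\<^sub>R u) \<le> norm u" using \<open>s \<in> {0..1}\<close> by (auto simp: mult_left_le_one_le)
      finally show ?thesis using \<open>dist a z + norm u < \<delta>\<close> by (simp add: dist_commute)
    qed
    have bound: "onorm (blinfun_apply (f' y) - blinfun_apply (f' z)) \<le> \<epsilon>" if "y \<in> ball z \<delta>" for y
    proof -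
      have "norm (f' y - f' z) < \<epsilon>" using close[of y] that by (simp add: dist_norm norm_minus_commute)
      then show ?thesis by (simp add: norm_blinfun.rep_eq minus_blinfun.rep_eq fun_diff_def)
    qed
    have "norm (f (a + u) - f a - f' z (a + u - a)) \<le> norm (a + u - a) * \<epsilon>"
      by (rule differentiable_bound_linearization[where S="ball z \<delta>" and f'="\<lambda>y. blinfun_apply (f' y)"])
        (use segment bound deriv \<open>\<delta> > 0\<close> in \<open>auto intro: has_derivative_at_withinI\<close>)
    then show ?thesis by (simp add: mult.commute)
  qed
  with \<open>\<delta> > 0\<close> that show ?thesis by blast
qed

lemma eventually_norm_diff_gt_of_derivative:
  fixes f :: "'a::real_normed_vector \<Rightarrow> 'b::real_normed_vector"
  assumes deriv: "\<And>y. (f has_derivative blinfun_apply (f' y)) (at y)"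
    and cont: "continuous (at z) f'"
    and a: "a \<longlonglongrightarrow> z" and u: "u \<longlonglongrightarrow> 0" "\<And>m. u m \<noteq> 0"
    and dir: "(\<lambda>m. u m /\<^sub>R norm (u m)) \<longlonglongrightarrow> v" and gt: "c < norm (f' z v)"
  shows "\<forall>\<^sub>F m in sequentially. c * norm (u m) < norm (f (a m + u m) - f (a m))"
proof -
  define \<epsilon> where "\<epsilon> = (norm (f' z v) - c) / 2"
  have "\<epsilon> > 0" using gt by (simp add: \<epsilon>_def)
  obtain \<delta> where "\<delta> > 0" and lin:
    "\<And>a u. dist a z + norm u < \<delta> \<Longrightarrow> norm (f (a + u) - f a - f' z u) \<le> \<epsilon> * norm u"
    using uniform_linearization[OF deriv cont \<open>\<epsilon> > 0\<close>] by blast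
  have "(\<lambda>m. dist (a m) z + norm (u m)) \<longlonglongrightarrow> 0"
    using tendsto_add[OF tendsto_dist[OF a tendsto_const[of z]] tendsto_norm[OF u(1)]] by simp
  then have "\<forall>\<^sub>F m in sequentially. dist (a m) z + norm (u m) < \<delta>"
    using \<open>\<delta> > 0\<close> by (rule order_tendstoD)
  moreover have "\<forall>\<^sub>F m in sequentially. c + \<epsilon> < norm (f' z (u m /\<^sub>R norm (u m)))"
    using gt by (intro order_tendstoD(1)[OF tendsto_norm[OF blinfun.tendsto[OF tendsto_const dir]]])
      (simp add: \<epsilon>_def field_simps)
  ultimately show ?thesis
  proof eventually_elim
    case (elim m)
    have "norm (f' z (u m)) = norm (u m) * norm (f' z (u m /\<^sub>R norm (u m)))"
      using u(2) by (simp add: blinfun.scaleR_right)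
    also have "\<dots> > norm (u m) * (c + \<epsilon>)" using elim(2) u(2) by simp
    finally have "c * norm (u m) + \<epsilon> * norm (u m) < norm (f' z (u m))"
      by (simp add: algebra_simps)
    moreover have "norm (f' z (u m)) \<le> norm (f (a m + u m) - f (a m)) + \<epsilon> * norm (u m)"
      using lin[OF elim(1)] norm_triangle_sub[of "f' z (u m)" "f (a m + u m) - f (a m)"]
        norm_minus_commute[of "f' z (u m)" "f (a m + u m) - f (a m)"]
      by linarith
    ultimately show ?case by linarith
  qed
qed

lemma bounded_pair_convergent_subsequence:
  fixes f :: "nat \<Rightarrow> 'a::heine_borel" and g :: "nat \<Rightarrow> 'b::heine_borel"
  assumes "bounded (range f)" and "bounded (range g)"
  obtains r a b where "strict_mono r" and "(f \<circ> r) \<longlonglongrightarrow> a" and "(g \<circ> r) \<longlonglongrightarrow> b"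
proof -
  have "range (\<lambda>m. (f m, g m)) \<subseteq> range f \<times> range g" by auto
  then have "bounded (range (\<lambda>m. (f m, g m)))"
    using assms bounded_Times bounded_subset by metis
  then obtain r p where "strict_mono r" and lim: "((\<lambda>m. (f m, g m)) \<circ> r) \<longlonglongrightarrow> p"
    using bounded_imp_convergent_subsequence by blast
  from tendsto_fst[OF lim] tendsto_snd[OF lim] have "(f \<circ> r) \<longlonglongrightarrow> fst p" "(g \<circ> r) \<longlonglongrightarrow> snd p"
    by (simp_all add: o_def)
  with \<open>strict_mono r\<close> that show ?thesis by blast
qed

(* Any factor greater than 1 would do in place of 3/2. *)
definition expands_cone_perturbations ::
  "(real \<Rightarrow> 'a::euclidean_space \<Rightarrow> 'a) \<Rightarrow> 'a set \<Rightarrow> 'a \<Rightarrow> real \<Rightarrow> real \<Rightarrow> bool" where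
  "expands_cone_perturbations \<Phi> C x S \<rho> \<longleftrightarrow>
     (\<forall>s\<ge>S. \<forall>u\<in>C. 0 < norm u \<and> norm u < \<rho> \<longrightarrow>
        (\<exists>t>0. 3/2 * norm u \<le> norm (\<Phi> t (\<Phi> s x + u) - \<Phi> t (\<Phi> s x))))"

lemma cone_perturbation_subsequence:
  fixes \<Phi> :: "real \<Rightarrow> 'a::euclidean_space \<Rightarrow> 'a" and s :: "nat \<Rightarrow> real" and u :: "nat \<Rightarrow> 'a"
  assumes bounded: "bounded (forward_orbit \<Phi> x)" and "closed C"
    and scaleC: "\<And>v l. v \<in> C \<Longrightarrow> l *\<^sub>R v \<in> C"
    and s: "\<And>m. s m \<ge> real m"
    and u: "\<And>m. u m \<in> C" "\<And>m. u m \<noteq> 0" "\<And>m. norm (u m) < 1 / (real m + 1)"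
  obtains r z v where "strict_mono r" and "(\<lambda>m. \<Phi> (s (r m)) x) \<longlonglongrightarrow> z" and "z \<in> omega_limit \<Phi> x"
    and "(\<lambda>m. u (r m)) \<longlonglongrightarrow> 0" and "(\<lambda>m. u (r m) /\<^sub>R norm (u (r m))) \<longlonglongrightarrow> v"
    and "v \<in> C" and "norm v = 1"
proof -
  have "range (\<lambda>m. \<Phi> (s m) x) \<subseteq> forward_orbit \<Phi> x"
    using s unfolding forward_orbit_def by (auto intro: order_trans[OF of_nat_0_le_iff])
  then have "bounded (range (\<lambda>m. \<Phi> (s m) x))" using bounded bounded_subset by blast
  moreover have "bounded (range (\<lambda>m. u m /\<^sub>R norm (u m)))"
    by (rule boundedI[of _ 1]) (auto simp: u(2))
  ultimately obtain r z v where r: "strict_mono r"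
    and lim_orbit: "(\<lambda>m. \<Phi> (s (r m)) x) \<longlonglongrightarrow> z"
    and lim_dir: "(\<lambda>m. u (r m) /\<^sub>R norm (u (r m))) \<longlonglongrightarrow> v"
    by (rule bounded_pair_convergent_subsequence) (simp add: o_def)
  have "filterlim (\<lambda>m. s (r m)) at_top sequentially"
  proof (rule filterlim_at_top_mono[OF filterlim_real_sequentially always_eventually], rule allI)
    show "real m \<le> s (r m)" for m using s[of "r m"] seq_suble[OF r, of m] by linarith
  qed
  with lim_orbit have "z \<in> omega_limit \<Phi> x" unfolding omega_limit_def by blast
  moreover have "v \<in> C"
    by (rule closed_sequentially[OF \<open>closed C\<close> _ lim_dir]) (simp add: scaleC u(1))
  moreover have "norm v = 1"
    using tendsto_norm[OF lim_dir] LIMSEQ_unique[OF _ tendsto_const] by (simp add: u(2))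
  moreover have "(\<lambda>m. u (r m)) \<longlonglongrightarrow> 0"
  proof -
    have "\<forall>m. norm (norm (u m)) \<le> 1 / (real m + 1)" using u(3) by (simp add: less_imp_le)
    moreover have "(\<lambda>m. 1 / (real m + 1)) \<longlonglongrightarrow> 0" by real_asymp
    ultimately have "(\<lambda>m. norm (u m)) \<longlonglongrightarrow> 0" by (rule Lim_null_comparison[OF always_eventually])
    then show ?thesis using LIMSEQ_subseq_LIMSEQ[OF tendsto_norm_zero_cancel r] by (simp add: o_def)
  qed
  ultimately show ?thesis using that r lim_orbit lim_dir by blast
qed

lemma eventually_expands_cone_perturbations:
  fixes \<Phi> :: "real \<Rightarrow> 'a::euclidean_space \<Rightarrow> 'a"
  assumes flow: "C1_alpha_flow \<alpha> \<Phi> D" and cone: "k_cone k C"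
    and es: "exp_separation \<Phi> D k C (omega_limit \<Phi> x) E F"
    and lyap: "\<forall>z\<in>omega_limit \<Phi> x. lyap_k D E z > 0"
    and bounded: "bounded (forward_orbit \<Phi> x)"
  shows "\<exists>S \<rho>. \<rho> > 0 \<and> expands_cone_perturbations \<Phi> C x S \<rho>"
proof (rule ccontr)
  assume "\<not> ?thesis"
  moreover have "1 / (real m + 1) > 0" for m by simp
  ultimately have "\<not> expands_cone_perturbations \<Phi> C x (real m) (1 / (real m + 1))" for m
    by blast
  then have "\<exists>s u. s \<ge> real m \<and> u \<in> C \<and> 0 < norm u \<and> norm u < 1 / (real m + 1) \<and>
      (\<forall>t>0. norm (\<Phi> t (\<Phi> s x + u) - \<Phi> t (\<Phi> s x)) < 3/2 * norm u)" for m
    unfolding expands_cone_perturbations_def by (auto simp: not_le) blast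
  then obtain s u where s: "\<And>m. s m \<ge> real m" and uC: "\<And>m. u m \<in> C"
    and u0: "\<And>m. u m \<noteq> 0" and small: "\<And>m. norm (u m) < 1 / (real m + 1)"
    and contracts: "\<And>m t. t > 0 \<Longrightarrow> norm (\<Phi> t (\<Phi> (s m) x + u m) - \<Phi> t (\<Phi> (s m) x)) < 3/2 * norm (u m)"
    by (metis norm_not_less_zero norm_zero)
  have "closed C" and scaleC: "\<And>v l. v \<in> C \<Longrightarrow> l *\<^sub>R v \<in> C"
    using cone unfolding k_cone_def by auto
  obtain r z v where lim_orbit: "(\<lambda>m. \<Phi> (s (r m)) x) \<longlonglongrightarrow> z" and z: "z \<in> omega_limit \<Phi> x"
    and lim_u: "(\<lambda>m. u (r m)) \<longlonglongrightarrow> 0" and lim_dir: "(\<lambda>m. u (r m) /\<^sub>R norm (u (r m))) \<longlonglongrightarrow> v"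
    and "v \<in> C" and "norm v = 1"
    by (rule cone_perturbation_subsequence[OF bounded \<open>closed C\<close> scaleC s uC u0 small])
  then have "v \<noteq> 0" by auto
  then obtain t where "t > 0" and grows: "3/2 < norm (D t z v)"
    using exp_separation_cone_growth[OF es z lyap[rule_format, OF z] \<open>v \<in> C\<close>, where A="3/2"]
    by blast
  have deriv: "\<And>y. (\<Phi> t has_derivative blinfun_apply (D t y)) (at y)"
    using flow unfolding C1_alpha_flow_def by blast
  have "\<forall>\<^sub>F m in sequentially.
      3/2 * norm (u (r m)) < norm (\<Phi> t (\<Phi> (s (r m)) x + u (r m)) - \<Phi> t (\<Phi> (s (r m)) x))"
    by (rule eventually_norm_diff_gt_of_derivative[OF deriv C1_alpha_flow_continuous_derivative[OF flow]
          lim_orbit lim_u u0 lim_dir grows])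
  then obtain m where "3/2 * norm (u (r m)) < norm (\<Phi> t (\<Phi> (s (r m)) x + u (r m)) - \<Phi> t (\<Phi> (s (r m)) x))"
    using eventually_sequentially by auto
  with contracts[OF \<open>t > 0\<close>, of "r m"] show False by linarith
qed

lemma expands_cone_perturbations_separates:
  fixes \<Phi> :: "real \<Rightarrow> 'a::euclidean_space \<Rightarrow> 'a"
  assumes flow: "is_flow \<Phi>" and mono: "strongly_monotone \<Phi> C"
    and expands: "expands_cone_perturbations \<Phi> C x S \<rho>"
    and y: "y - x \<in> C" "y \<noteq> x"
  shows "\<exists>t\<ge>0. \<rho> \<le> norm (\<Phi> t y - \<Phi> t x)"
proof (rule ccontr)
  assume "\<not> ?thesis"
  then have close: "\<And>t. t \<ge> 0 \<Longrightarrow> norm (\<Phi> t y - \<Phi> t x) < \<rho>" by (meson not_le)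
  define w where "w s = \<Phi> s y - \<Phi> s x" for s
  define S' where "S' = max S 0"
  have "w s \<noteq> 0" for s
    using flow_inj[OF flow, of s y x] y(2) unfolding w_def by auto
  have step: "\<exists>s'\<ge>S'. 3/2 * norm (w s) \<le> norm (w s')" if "s \<ge> S'" for s
  proof -
    have "s \<ge> 0" "s \<ge> S" using that by (auto simp: S'_def)
    have "w s \<in> C"
      using mono y(1) \<open>s \<ge> 0\<close> unfolding strongly_monotone_def cone_rel_def w_def by blast
    moreover have "0 < norm (w s)" "norm (w s) < \<rho>"
      using \<open>w s \<noteq> 0\<close> close[OF \<open>s \<ge> 0\<close>] by (auto simp: w_def)
    ultimately obtain t where "t > 0" "3/2 * norm (w s) \<le> norm (\<Phi> t (\<Phi> s x + w s) - \<Phi> t (\<Phi> s x))"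
      using expands \<open>s \<ge> S\<close> unfolding expands_cone_perturbations_def by blast
    then show ?thesis
      using that by (intro exI[of _ "t + s"]) (simp add: w_def flow_add[OF flow])
  qed
  have growth: "\<exists>s\<ge>S'. (3/2) ^ n * norm (w S') \<le> norm (w s)" for n
  proof (induction n)
    case (Suc n)
    then obtain s where "s \<ge> S'" "(3/2) ^ n * norm (w S') \<le> norm (w s)" by blast
    moreover obtain s' where "s' \<ge> S'" "3/2 * norm (w s) \<le> norm (w s')"
      using step[OF \<open>s \<ge> S'\<close>] by blast
    ultimately have "(3/2) ^ Suc n * norm (w S') \<le> norm (w s')" by simp
    with \<open>s' \<ge> S'\<close> show ?case by blast
  qed auto
  obtain n where "\<rho> / norm (w S') < (3/2::real) ^ n"
    using real_arch_pow[of "3/2"] by auto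
  then have "\<rho> < (3/2) ^ n * norm (w S')"
    using \<open>w S' \<noteq> 0\<close> by (simp add: pos_divide_less_eq)
  moreover obtain s where "s \<ge> S'" "(3/2) ^ n * norm (w S') \<le> norm (w s)"
    using growth by blast
  ultimately show False using close[of s] by (simp add: S'_def w_def)
qed

lemma expands_cone_perturbations_reaches_distance:
  fixes \<Phi> :: "real \<Rightarrow> 'a::euclidean_space \<Rightarrow> 'a"
  assumes flow: "is_flow \<Phi>" and mono: "strongly_monotone \<Phi> C"
    and expands: "expands_cone_perturbations \<Phi> C x S \<rho>"
    and y: "y - x \<in> C" "y \<noteq> x" "norm (y - x) \<le> \<rho>"
  shows "\<exists>t\<ge>0. norm (\<Phi> t y - \<Phi> t x) = \<rho>"
proof -
  obtain t1 where "t1 \<ge> 0" "\<rho> \<le> norm (\<Phi> t1 y - \<Phi> t1 x)"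
    using expands_cone_perturbations_separates[OF flow mono expands y(1,2)] by blast
  moreover have "norm (\<Phi> 0 y - \<Phi> 0 x) \<le> \<rho>" using flow y(3) unfolding is_flow_def by simp
  moreover have "continuous_on {0..t1} (\<lambda>t. norm (\<Phi> t y - \<Phi> t x))"
    by (intro continuous_intros continuous_on_subset[OF continuous_on_flow_time[OF flow]]) auto
  ultimately show ?thesis using IVT'[of "\<lambda>t. norm (\<Phi> t y - \<Phi> t x)" 0 \<rho> t1] by auto
qed

lemma pseudo_ordered_setI:
  assumes "0 \<le> t1" "0 \<le> t2" "\<Phi> t1 q \<noteq> \<Phi> t2 q" "\<Phi> t1 q - \<Phi> t2 q \<in> C"
  shows "q \<in> pseudo_ordered_set \<Phi> C"
proof -
  have "\<exists>t. \<Phi> t q \<noteq> q" using assms(3) by metis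
  with assms show ?thesis unfolding pseudo_ordered_set_def cone_rel_def by blast
qed

lemma strongly_monotone_ordered_nearby:
  fixes \<Phi> :: "real \<Rightarrow> 'a::euclidean_space \<Rightarrow> 'a"
  assumes flow: "is_flow \<Phi>" and mono: "strongly_monotone \<Phi> C"
    and "w - z \<in> C" and "w \<noteq> z"
  obtains \<delta> where "\<delta> > 0"
    and "\<And>a b. dist a z < \<delta> \<Longrightarrow> dist b w < \<delta> \<Longrightarrow> \<Phi> 1 b - \<Phi> 1 a \<in> C \<and> \<Phi> 1 b \<noteq> \<Phi> 1 a"
proof -
  have "\<Phi> 1 w - \<Phi> 1 z \<in> interior C"
    using mono assms(3,4) unfolding strongly_monotone_def cone_rel_def cone_rel_strict_def by simp
  then obtain e where "e > 0" and "ball (\<Phi> 1 w - \<Phi> 1 z) e \<subseteq> interior C"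
    using open_interior open_contains_ball by blast
  then have ball: "ball (\<Phi> 1 w - \<Phi> 1 z) e \<subseteq> C" using interior_subset by blast
  have cont: "continuous (at p) (\<Phi> 1)" for p
    using continuous_on_flow_space[OF flow] continuous_on_eq_continuous_at by blast
  obtain d1 where "d1 > 0" and d1: "\<And>b. dist b w < d1 \<Longrightarrow> dist (\<Phi> 1 b) (\<Phi> 1 w) < e/2"
    using cont[of w] \<open>e > 0\<close> unfolding continuous_at_eps_delta by (meson half_gt_zero)
  obtain d2 where "d2 > 0" and d2: "\<And>a. dist a z < d2 \<Longrightarrow> dist (\<Phi> 1 a) (\<Phi> 1 z) < e/2"
    using cont[of z] \<open>e > 0\<close> unfolding continuous_at_eps_delta by (meson half_gt_zero)
  define \<delta> where "\<delta> = min (min d1 d2) (dist w z / 2)"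
  have "\<delta> > 0" using \<open>d1 > 0\<close> \<open>d2 > 0\<close> \<open>w \<noteq> z\<close> by (simp add: \<delta>_def)
  moreover have "\<Phi> 1 b - \<Phi> 1 a \<in> C \<and> \<Phi> 1 b \<noteq> \<Phi> 1 a" if "dist a z < \<delta>" "dist b w < \<delta>" for a b
  proof
    have "dist (\<Phi> 1 b - \<Phi> 1 a) (\<Phi> 1 w - \<Phi> 1 z) \<le> dist (\<Phi> 1 b) (\<Phi> 1 w) + dist (\<Phi> 1 a) (\<Phi> 1 z)"
      unfolding dist_norm by (rule order_trans[OF _ norm_triangle_ineq4]) (simp add: algebra_simps)
    also have "\<dots> < e" using d1[of b] d2[of a] that by (simp add: \<delta>_def)
    finally show "\<Phi> 1 b - \<Phi> 1 a \<in> C" using ball by (auto simp: dist_commute)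
    have "a \<noteq> b"
    proof
      assume "a = b"
      then have "dist w z \<le> dist b w + dist a z" using dist_triangle3[of w z b] by simp
      moreover have "\<delta> \<le> dist w z / 2" by (simp add: \<delta>_def)
      ultimately show False using that by linarith
    qed
    then show "\<Phi> 1 b \<noteq> \<Phi> 1 a" using flow_inj[OF flow] by metis
  qed
  ultimately show ?thesis using that by blast
qed

lemma ordered_orbits_limit_pair:
  fixes \<Phi> :: "real \<Rightarrow> 'a::euclidean_space \<Rightarrow> 'a" and y :: "nat \<Rightarrow> 'a" and t :: "nat \<Rightarrow> real"
  assumes mono: "strongly_monotone \<Phi> C" and "closed C"
    and bounded: "bounded (forward_orbit \<Phi> x)" and "\<rho> > 0" and y: "\<And>m. y m - x \<in> C"
    and t: "\<And>m. t m \<ge> 0" "\<And>m. norm (\<Phi> (t m) (y m) - \<Phi> (t m) x) = \<rho>"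
  obtains r z w where "strict_mono r"
    and "(\<lambda>m. \<Phi> (t (r m)) x) \<longlonglongrightarrow> z" and "(\<lambda>m. \<Phi> (t (r m)) (y (r m))) \<longlonglongrightarrow> w"
    and "w - z \<in> C" and "w \<noteq> z"
proof -
  obtain B where B: "\<And>p. p \<in> forward_orbit \<Phi> x \<Longrightarrow> norm p \<le> B"
    using bounded unfolding bounded_iff by blast
  have orbit: "norm (\<Phi> (t m) x) \<le> B" for m
    using B t(1) unfolding forward_orbit_def by auto
  then have "norm (\<Phi> (t m) (y m)) \<le> B + \<rho>" for m
    using t(2)[of m] norm_triangle_ineq2[of "\<Phi> (t m) (y m)" "\<Phi> (t m) x"] by (smt (verit))
  with orbit have "bounded (range (\<lambda>m. \<Phi> (t m) x))" "bounded (range (\<lambda>m. \<Phi> (t m) (y m)))"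
    by (auto intro!: boundedI)
  then obtain r z w where r: "strict_mono r"
    and lim_x: "(\<lambda>m. \<Phi> (t (r m)) x) \<longlonglongrightarrow> z" and lim_y: "(\<lambda>m. \<Phi> (t (r m)) (y (r m))) \<longlonglongrightarrow> w"
    by (rule bounded_pair_convergent_subsequence) (simp add: o_def)
  have "\<Phi> (t m) (y m) - \<Phi> (t m) x \<in> C" for m
    using mono y t(1) unfolding strongly_monotone_def cone_rel_def by blast
  then have "w - z \<in> C"
    by (intro closed_sequentially[OF \<open>closed C\<close> _ tendsto_diff[OF lim_y lim_x]]) simp
  moreover have "norm (w - z) = \<rho>"
    using tendsto_norm[OF tendsto_diff[OF lim_y lim_x]] LIMSEQ_unique[OF _ tendsto_const] t(2) by simp
  ultimately show ?thesis using that r lim_x lim_y \<open>\<rho> > 0\<close> by force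
qed

lemma closure_pseudo_ordered_setI:
  fixes \<Phi> :: "real \<Rightarrow> 'a::euclidean_space \<Rightarrow> 'a" and y :: "nat \<Rightarrow> 'a" and t :: "nat \<Rightarrow> real"
  assumes flow: "is_flow \<Phi>" and mono: "strongly_monotone \<Phi> C"
    and y: "y \<longlonglongrightarrow> x" and t: "\<And>m. t m \<ge> 0"
    and lim_x: "(\<lambda>m. \<Phi> (t m) x) \<longlonglongrightarrow> z" and lim_y: "(\<lambda>m. \<Phi> (t m) (y m)) \<longlonglongrightarrow> w"
    and "w - z \<in> C" and "w \<noteq> z"
  shows "x \<in> closure (pseudo_ordered_set \<Phi> C)"
proof -
  obtain \<delta> where "\<delta> > 0" and ordered:
    "\<And>a b. dist a z < \<delta> \<Longrightarrow> dist b w < \<delta> \<Longrightarrow> \<Phi> 1 b - \<Phi> 1 a \<in> C \<and> \<Phi> 1 b \<noteq> \<Phi> 1 a"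
    using strongly_monotone_ordered_nearby[OF flow mono \<open>w - z \<in> C\<close> \<open>w \<noteq> z\<close>] by blast
  obtain \<sigma> where "\<sigma> \<ge> 0" and \<sigma>: "dist (\<Phi> \<sigma> x) z < \<delta>/2"
    using lim_x \<open>\<delta> > 0\<close> t unfolding LIMSEQ_def by (metis half_gt_zero order_refl)
  have lim_\<sigma>: "(\<lambda>m. \<Phi> \<sigma> (y m)) \<longlonglongrightarrow> \<Phi> \<sigma> x"
    using continuous_on_tendsto_compose[OF continuous_on_flow_space[OF flow] y] by (simp add: o_def)
  show ?thesis unfolding closure_approachable
  proof (intro allI impI)
    fix \<epsilon> :: real assume "\<epsilon> > 0"
    have "\<forall>\<^sub>F m in sequentially. dist (\<Phi> \<sigma> (y m)) (\<Phi> \<sigma> x) < \<delta>/2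
        \<and> dist (\<Phi> (t m) (y m)) w < \<delta> \<and> dist (y m) x < \<epsilon>"
      using tendstoD[OF lim_\<sigma> half_gt_zero[OF \<open>\<delta> > 0\<close>]] tendstoD[OF lim_y \<open>\<delta> > 0\<close>]
        tendstoD[OF y \<open>\<epsilon> > 0\<close>]
      by eventually_elim simp
    then obtain m where m: "dist (\<Phi> \<sigma> (y m)) (\<Phi> \<sigma> x) < \<delta>/2"
        "dist (\<Phi> (t m) (y m)) w < \<delta>" "dist (y m) x < \<epsilon>"
      using eventually_sequentially by auto
    have "dist (\<Phi> \<sigma> (y m)) z < \<delta>"
      using m(1) \<sigma> dist_triangle_half_l[of "\<Phi> \<sigma> (y m)" "\<Phi> \<sigma> x" \<delta> z] by (simp add: dist_commute)
    from ordered[OF this m(2)]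
    have "\<Phi> (1 + t m) (y m) - \<Phi> (1 + \<sigma>) (y m) \<in> C" "\<Phi> (1 + t m) (y m) \<noteq> \<Phi> (1 + \<sigma>) (y m)"
      by (simp_all add: flow_add[OF flow])
    then have "y m \<in> pseudo_ordered_set \<Phi> C"
      using t \<open>\<sigma> \<ge> 0\<close> by (intro pseudo_ordered_setI) auto
    with m(3) show "\<exists>q\<in>pseudo_ordered_set \<Phi> C. dist q x < \<epsilon>" by blast
  qed
qed

lemma k_cone_unit_vector:
  assumes "k_cone k C" and "1 \<le> k"
  obtains v where "v \<in> C" and "norm v = 1"
proof -
  obtain W where "subspace W" "W \<subseteq> C" "dim W = k"
    using assms(1) unfolding k_cone_def by blast
  with assms(2) obtain w where "w \<in> W" "w \<noteq> 0"
    using dim_eq_0[of W] by (metis le_zero_eq not_one_le_zero subsetI singletonI subset_singletonD)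
  with \<open>subspace W\<close> \<open>W \<subseteq> C\<close> have "w /\<^sub>R norm w \<in> C" by (auto intro: subspace_scale)
  with \<open>w \<noteq> 0\<close> that show ?thesis by simp
qed

lemma k_cone_approximating_sequence:
  fixes x :: "'a::euclidean_space"
  assumes cone: "k_cone k C" and "1 \<le> k" and "\<rho> > 0"
  obtains y where "y \<longlonglongrightarrow> x" and "\<And>m. y m - x \<in> C" and "\<And>m. y m \<noteq> x"
    and "\<And>m. norm (y m - x) \<le> \<rho>"
proof -
  obtain v where "v \<in> C" "norm v = 1" using k_cone_unit_vector[OF cone \<open>1 \<le> k\<close>] .
  define y where "y = (\<lambda>m::nat. x + (\<rho> / (real m + 2)) *\<^sub>R v)"
  have "y m - x \<in> C" for m
    using \<open>v \<in> C\<close> cone unfolding k_cone_def y_def by simp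
  moreover have "y m \<noteq> x" "norm (y m - x) \<le> \<rho>" for m
    using \<open>norm v = 1\<close> \<open>\<rho> > 0\<close> by (auto simp: y_def field_simps)
  moreover have "(\<lambda>m. \<rho> / (real m + 2)) \<longlonglongrightarrow> 0" by real_asymp
  from tendsto_add[OF tendsto_const[of x] tendsto_scaleR[OF this tendsto_const[of v]]]
  have "y \<longlonglongrightarrow> x" by (simp add: y_def)
  ultimately show ?thesis using that by blast
qed

theorem theorem4p5:
  fixes \<Phi> :: "real \<Rightarrow> 'a::euclidean_space \<Rightarrow> 'a"
    and D :: "real \<Rightarrow> 'a \<Rightarrow> 'a \<Rightarrow>\<^sub>L 'a"
    and C :: "'a set" and k :: nat and \<alpha> :: real
    and \<D> :: "'a set" and x :: 'a
    and E F :: "'a \<Rightarrow> 'a set"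
  assumes "1 \<le> k"
    and "FWW \<alpha> \<Phi> D k C"
    and "open \<D>" and "omega_compact \<Phi> \<D>" and "x \<in> \<D>"
    and "exp_separation \<Phi> D k C (omega_limit \<Phi> x) E F"
    and "\<forall>z\<in>omega_limit \<Phi> x. lyap_k D E z > 0"
  shows "x \<in> closure (pseudo_ordered_set \<Phi> C)"
proof -
  have C1: "C1_alpha_flow \<alpha> \<Phi> D" and cone: "k_cone k C" and mono: "strongly_monotone \<Phi> C"
    using assms(2) unfolding FWW_def by auto
  have flow: "is_flow \<Phi>" using C1 unfolding C1_alpha_flow_def by simp
  have "closed C" using cone unfolding k_cone_def by simp
  have bounded: "bounded (forward_orbit \<Phi> x)" using assms(4,5) unfolding omega_compact_def by simp
  obtain S \<rho> where "\<rho> > 0" and expands: "expands_cone_perturbations \<Phi> C x S \<rho>"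
    using eventually_expands_cone_perturbations[OF C1 cone assms(6,7) bounded] by blast
  obtain y where "y \<longlonglongrightarrow> x" and y: "\<And>m. y m - x \<in> C" "\<And>m. y m \<noteq> x" "\<And>m. norm (y m - x) \<le> \<rho>"
    by (rule k_cone_approximating_sequence[OF cone assms(1) \<open>\<rho> > 0\<close>, where x = x]) blast
  have "\<exists>t\<ge>0. norm (\<Phi> t (y m) - \<Phi> t x) = \<rho>" for m
    using expands_cone_perturbations_reaches_distance[OF flow mono expands y] .
  then obtain t where t: "\<And>m. t m \<ge> 0" "\<And>m. norm (\<Phi> (t m) (y m) - \<Phi> (t m) x) = \<rho>" by metis
  obtain r z w where r: "strict_mono r" and "(\<lambda>m. \<Phi> (t (r m)) x) \<longlonglongrightarrow> z"
    and "(\<lambda>m. \<Phi> (t (r m)) (y (r m))) \<longlonglongrightarrow> w" and "w - z \<in> C" and "w \<noteq> z"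
    by (rule ordered_orbits_limit_pair[OF mono \<open>closed C\<close> bounded \<open>\<rho> > 0\<close> y(1) t])
  then show ?thesis
    using closure_pseudo_ordered_setI[OF flow mono LIMSEQ_subseq_LIMSEQ[OF \<open>y \<longlonglongrightarrow> x\<close> r], of "t \<circ> r"] t(1)
    by (simp add: o_def)
qed

end
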